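(* Let $D=(-1,1)$, $\nu=1/2$, and $\phi_j(t)=e^{\mathrm{i}j\pi t}$, $j\in\mathbb Z$. Let $T=\{t_n\}_{n=1}^N\subseteq[-1,1]$ be a set of $N$ points such that $t_nP\in\mathbb Z$ for some $P\in\mathbb N$ and all $n=1,\dots,N$. Let $U=\{\phi_j(t_n)\}_{n=1,\dots,N,\ j\in\mathbb Z}$ and $y\in\mathbb C^N$, and suppose $\hat x\in\ell^1(\mathbb Z)$ is a solution of $$\inf_{z\in\ell^1(\mathbb Z)}\|z\|_1\quad\text{subject to } Uz=y.$$ Then for every $k\in\mathbb Z$, the element $z\in\ell^1(\mathbb Z)$ given by $z_i=\hat x_{i-2kP}$, $i\in\mathbb Z$, is also a solution of this problem.
   Context: $U$ is viewed as the linear map $\ell^1(\mathbb Z)\to\mathbb C^N$, $(Uz)_n=\sum_{j\in\mathbb Z}z_j e^{\mathrm i j\pi t_n}$; $\|z\|_1=\sum_{j\in\mathbb Z}|z_j|$. *)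

theory Defs
  imports "HOL-Analysis.Analysis"
begin

definition l1 :: "(int \<Rightarrow> complex) set" where
  "l1 = {z. (\<lambda>j. norm (z j)) summable_on UNIV}"

definition l1norm :: "(int \<Rightarrow> complex) \<Rightarrow> real" where
  "l1norm z = (\<Sum>\<^sub>\<infinity>j\<in>UNIV. norm (z j))"

definition phi :: "int \<Rightarrow> real \<Rightarrow> complex" where
  "phi j t = exp (\<i> * of_int j * of_real pi * of_real t)"

definition Uop :: "(nat \<Rightarrow> real) \<Rightarrow> (int \<Rightarrow> complex) \<Rightarrow> nat \<Rightarrow> complex" where
  "Uop t z n = (\<Sum>\<^sub>\<infinity>j\<in>UNIV. z j * phi j (t n))"

definition is_l1_solution ::
  "nat \<Rightarrow> (nat \<Rightarrow> real) \<Rightarrow> (nat \<Rightarrow> complex) \<Rightarrow> (int \<Rightarrow> complex) \<Rightarrow> bool" where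
  "is_l1_solution N t y xh \<longleftrightarrow>
     xh \<in> l1 \<and> (\<forall>n\<in>{1..N}. Uop t xh n = y n) \<and>
     (\<forall>z\<in>l1. (\<forall>n\<in>{1..N}. Uop t z n = y n) \<longrightarrow> l1norm xh \<le> l1norm z)"

end

theory Submission
  imports Defs
begin

text \<open>Translating the index by a multiple \<open>s\<close> of \<open>2P\<close> leaves every \<open>\<phi>\<^sub>j(t\<^sub>n)\<close> unchanged,
  since \<open>s \<pi> t\<^sub>n \<in> 2\<pi>\<int>\<close>. Hence the translate of a feasible point is feasible, and translation
  preserves the \<open>\<ell>\<^sup>1\<close> norm, so it maps minimisers to minimisers.\<close>

lemma bij_betw_int_translate: "bij_betw (\<lambda>i::int. i - s) UNIV UNIV"
  by (rule bij_betwI[where g = "\<lambda>i. i + s"]) auto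

lemma infsum_int_translate: "(\<Sum>\<^sub>\<infinity>i\<in>UNIV. f (i - s :: int)) = (\<Sum>\<^sub>\<infinity>i\<in>UNIV. f i)"
  using infsum_reindex_bij_betw[OF bij_betw_int_translate, of f s] by simp

lemma summable_on_int_translate_iff:
  "(\<lambda>i::int. f (i - s)) summable_on UNIV \<longleftrightarrow> f summable_on UNIV"
  using summable_on_reindex_bij_betw[OF bij_betw_int_translate, of f s] by simp

lemma l1_translate_iff: "(\<lambda>i. z (i - s)) \<in> l1 \<longleftrightarrow> z \<in> l1"
  unfolding l1_def using summable_on_int_translate_iff[of "\<lambda>j. norm (z j)" s] by simp

lemma l1norm_translate: "l1norm (\<lambda>i. z (i - s)) = l1norm z"
  unfolding l1norm_def using infsum_int_translate[of "\<lambda>j. norm (z j)" s] by simp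

lemma Uop_translate:
  assumes "\<And>j. phi (j + s) (t n) = phi j (t n)"
  shows "Uop t (\<lambda>i. z (i - s)) n = Uop t z n"
proof -
  have "Uop t (\<lambda>i. z (i - s)) n = (\<Sum>\<^sub>\<infinity>i\<in>UNIV. (\<lambda>j. z j * phi (j + s) (t n)) (i - s))"
    unfolding Uop_def by simp
  also have "\<dots> = (\<Sum>\<^sub>\<infinity>j\<in>UNIV. z j * phi (j + s) (t n))"
    by (rule infsum_int_translate)
  finally show ?thesis
    unfolding Uop_def assms .
qed

lemma is_l1_solution_translate:
  assumes "\<And>n j. n \<in> {1..N} \<Longrightarrow> phi (j + s) (t n) = phi j (t n)"
    and "is_l1_solution N t y xh"
  shows "is_l1_solution N t y (\<lambda>i. xh (i - s))"
proof -
  have "Uop t (\<lambda>i. xh (i - s)) n = Uop t xh n" if "n \<in> {1..N}" for n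
    using Uop_translate assms(1)[OF that] by blast
  with assms(2) show ?thesis
    unfolding is_l1_solution_def l1_translate_iff l1norm_translate by simp
qed

lemma phi_add_2_mult:
  assumes "of_int m * x \<in> \<int>"
  shows "phi (j + 2 * m) x = phi j x"
proof -
  obtain l :: int where l: "of_int m * x = of_int l"
    using assms Ints_cases by blast
  have "complex_of_int m * of_real x = of_int l"
    using arg_cong[OF l, of complex_of_real] by simp
  then have "\<i> * of_int (j + 2 * m) * of_real pi * of_real x
      = \<i> * of_int j * of_real pi * of_real x + 2 * of_int l * pi * \<i>"
    by (simp add: algebra_simps)
  moreover have "exp (2 * of_int l * pi * \<i>) = 1"
    using exp_integer_2pi[of "of_int l"] by simp
  ultimately show ?thesis
    unfolding phi_def by (simp add: exp_add)
qed

theorem proposition4p1: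
  fixes N P :: nat and t :: "nat \<Rightarrow> real" and y :: "nat \<Rightarrow> complex"
    and xh :: "int \<Rightarrow> complex" and k :: int
  assumes "\<forall>n\<in>{1..N}. t n \<in> {-1..1}"
    and "\<forall>n\<in>{1..N}. t n * real P \<in> \<int>"
    and "is_l1_solution N t y xh"
  shows "is_l1_solution N t y (\<lambda>i. xh (i - 2 * k * int P))"
proof (rule is_l1_solution_translate[OF _ assms(3)])
  fix n j
  assume "n \<in> {1..N}"
  then have "of_int (k * int P) * t n \<in> \<int>"
    using assms(2) by (simp add: mult.commute mult.left_commute Ints_mult)
  from phi_add_2_mult[OF this, of j] show "phi (j + 2 * k * int P) (t n) = phi j (t n)"
    by (simp add: mult.assoc)
qed

end
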